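(* There exist a complex number $\gamma\in\mathbb C$ with $\operatorname{Im}(\gamma)<0$ and a complex-valued solution $W:\mathbb R\to\mathbb C$ of the ordinary differential equation \[ \gamma\,(\gamma-z^2)^2\,\frac{d}{dz}W(z)+\frac{d^3}{dz^3}\Big[(\gamma-z^2)W(z)\Big]=0,\qquad z\in\mathbb R, \] such that $\lim_{z\to-\infty}W(z)=0$ and $\lim_{z\to+\infty}W(z)=1$. *)

theory Defs
  imports "HOL-Analysis.Analysis"
begin

end

theory Submission
  imports Defs "HOL-Complex_Analysis.Complex_Analysis" "HOL-Real_Asymp.Real_Asymp"
begin

text \<open>
  Let \<gamma> be a cube root of unity, f(z) = exp(\<gamma>^2 z^2/2) and F the primitive of f with F(0) = 0.
  Then W = 1/2 + B (z f(z)/(\<gamma> - z^2) + \<gamma>^2 F(z)) has W' = 2\<gamma>B f/(\<gamma> - z^2)^2, and for this W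
  the equation reduces to the identity \<gamma>^3 = 1. For \<gamma> = exp(-2\<pi>i/3) we have Re \<gamma>^2 < 0, so the
  first summand vanishes at \<plusminus>\<infinity> and, F being odd, W(t) tends to 1/2 \<plusminus> B\<gamma>^2 c as t \<rightarrow> \<plusminus>\<infinity>,
  where c is the limit of F at +\<infinity>. Cauchy's theorem on the triangle 0, \<omega>R, R with \<omega> = exp(\<pi>i/6),
  for which \<gamma>^2 \<omega>^2 = -1, gives c = \<omega> \<integral>[0,\<infinity>) exp(-s^2/2) ds \<noteq> 0; then B = 1/(2\<gamma>^2 c) gives
  the limits 0 and 1.
\<close>

lemma has_field_derivative_zero_imp_eq:
  fixes f :: "'a::real_normed_field \<Rightarrow> 'a"
  assumes "\<And>x. (f has_field_derivative 0) (at x)"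
  shows "f x = f y"
  using has_field_derivative_zero_constant[of UNIV f] assms by auto

lemma tendsto_SUP_at_top_mono:
  fixes f :: "'a::linorder \<Rightarrow> 'b::{conditionally_complete_linorder, linorder_topology}"
  assumes "mono f" "bdd_above (range f)"
  shows "(f \<longlongrightarrow> (SUP x. f x)) at_top"
proof (rule increasing_tendsto)
  show "\<forall>\<^sub>F x in at_top. f x \<le> (SUP x. f x)"
    using assms(2) by (intro always_eventually allI cSUP_upper) auto
next
  fix l assume "l < (SUP x. f x)"
  then obtain x where "l < f x"
    using less_cSUP_iff[OF _ assms(2)] by auto
  then have "l < f y" if "x \<le> y" for y
    using assms(1) that by (meson less_le_trans monoD)
  then show "\<forall>\<^sub>F y in at_top. l < f y"
    by (rule eventually_mono[OF eventually_ge_at_top[of x]])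
qed

definition gauss :: "complex \<Rightarrow> complex \<Rightarrow> complex" where
  "gauss a w = exp (a * w\<^sup>2 / 2)"

definition gauss_prim :: "complex \<Rightarrow> complex \<Rightarrow> complex" where
  "gauss_prim a w = contour_integral (linepath 0 w) (gauss a)"

lemma gauss_has_field_derivative [derivative_intros]:
  "(gauss a has_field_derivative a * w * gauss a w) (at w within S)"
  unfolding gauss_def by (auto intro!: derivative_eq_intros)

lemma gauss_holomorphic: "gauss a holomorphic_on S"
  unfolding gauss_def [abs_def] by (auto intro!: holomorphic_intros)

lemma gauss_even: "gauss a (-w) = gauss a w"
  by (simp add: gauss_def)

lemma gauss_of_real: "gauss (of_real b) (of_real t) = of_real (exp (b * t\<^sup>2 / 2))"
  by (simp add: gauss_def flip: exp_of_real)

lemma norm_gauss_of_real: "norm (gauss a (of_real t)) = exp (Re a * t\<^sup>2 / 2)"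
  by (simp add: gauss_def power2_eq_square)

lemma gauss_prim_has_field_derivative:
  "(gauss_prim a has_field_derivative gauss a w) (at w within S)"
proof -
  have "((\<lambda>w. contour_integral (linepath 0 w) (gauss a)) has_field_derivative gauss a w)
          (at w within UNIV)"
  proof (rule triangle_contour_integrals_convex_primitive)
    show "continuous_on UNIV (gauss a)"
      by (intro holomorphic_on_imp_continuous_on gauss_holomorphic)
    fix b c
    show "contour_integral (linepath 0 b) (gauss a) + contour_integral (linepath b c) (gauss a) +
          contour_integral (linepath c 0) (gauss a) = 0"
      by (intro has_chain_integral_chain_integral3 Cauchy_theorem_triangle gauss_holomorphic)
  qed auto
  then show ?thesis
    unfolding gauss_prim_def [abs_def] by (auto intro: has_field_derivative_at_within)
qed

lemma gauss_prim_has_field_derivative_chain [derivative_intros]: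
  "(g has_field_derivative g') (at x within S) \<Longrightarrow>
    ((\<lambda>x. gauss_prim a (g x)) has_field_derivative gauss a (g x) * g') (at x within S)"
  using DERIV_chain2[OF gauss_prim_has_field_derivative] .

lemma gauss_prim_0 [simp]: "gauss_prim a 0 = 0"
  by (simp add: gauss_prim_def)

lemma has_contour_integral_gauss_linepath:
  "(gauss a has_contour_integral gauss_prim a v - gauss_prim a u) (linepath u v)"
  using contour_integral_primitive[where S = UNIV, OF gauss_prim_has_field_derivative valid_path_linepath]
  by simp

lemma gauss_prim_odd: "gauss_prim a (-w) = - gauss_prim a w"
proof -
  have "gauss_prim a (-w) + gauss_prim a w = gauss_prim a (-0) + gauss_prim a 0"
    by (rule has_field_derivative_zero_imp_eq) (auto intro!: derivative_eq_intros simp: gauss_even)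
  then show ?thesis
    by (simp add: eq_neg_iff_add_eq_0)
qed

lemma gauss_prim_rotate:
  assumes "a * c\<^sup>2 = b"
  shows "gauss_prim a (c * w) = c * gauss_prim b w"
proof -
  have "gauss a (c * w) = gauss b w" for w
    by (simp add: gauss_def power_mult_distrib mult.assoc flip: assms)
  then have "gauss_prim a (c * w) - c * gauss_prim b w = gauss_prim a (c * 0) - c * gauss_prim b 0"
    by (intro has_field_derivative_zero_imp_eq) (auto intro!: derivative_eq_intros)
  then show ?thesis
    by simp
qed

lemma Im_gauss_prim_of_real: "Im (gauss_prim (of_real b) (of_real t)) = 0"
proof -
  have "Im (gauss_prim (of_real b) (of_real t)) = Im (gauss_prim (of_real b) (of_real 0))"
  proof (rule has_field_derivative_zero_imp_eq[where f = "\<lambda>t. Im (gauss_prim (of_real b) (of_real t))"])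
    fix t
    have "((\<lambda>t. gauss_prim (of_real b) (of_real t)) has_vector_derivative
            gauss (of_real b) (of_real t)) (at t)"
      by (intro has_vector_derivative_real_field gauss_prim_has_field_derivative)
    then show "((\<lambda>t. Im (gauss_prim (of_real b) (of_real t))) has_field_derivative 0) (at t)"
      using has_field_derivative_Im by (fastforce simp: gauss_of_real)
  qed
  then show ?thesis
    by simp
qed

definition sol :: "complex \<Rightarrow> complex \<Rightarrow> complex \<Rightarrow> complex" where
  "sol \<gamma> B w = 1/2 + B * (w * gauss (\<gamma>\<^sup>2) w / (\<gamma> - w\<^sup>2) + \<gamma>\<^sup>2 * gauss_prim (\<gamma>\<^sup>2) w)"

definition sol_deriv :: "complex \<Rightarrow> complex \<Rightarrow> complex \<Rightarrow> complex" where
  "sol_deriv \<gamma> B w = 2 * \<gamma> * B * gauss (\<gamma>\<^sup>2) w / (\<gamma> - w\<^sup>2)\<^sup>2"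

definition weighted_sol_d1 :: "complex \<Rightarrow> complex \<Rightarrow> complex \<Rightarrow> complex" where
  "weighted_sol_d1 \<gamma> B w = -2 * w * sol \<gamma> B w + 2 * \<gamma> * B * gauss (\<gamma>\<^sup>2) w / (\<gamma> - w\<^sup>2)"

definition weighted_sol_d2 :: "complex \<Rightarrow> complex \<Rightarrow> complex \<Rightarrow> complex" where
  "weighted_sol_d2 \<gamma> B w = -2 * sol \<gamma> B w + 2 * \<gamma> ^ 3 * B * w * gauss (\<gamma>\<^sup>2) w / (\<gamma> - w\<^sup>2)"

definition weighted_sol_d3 :: "complex \<Rightarrow> complex \<Rightarrow> complex \<Rightarrow> complex" where
  "weighted_sol_d3 \<gamma> B w = -2 * sol_deriv \<gamma> B w + 2 * \<gamma> ^ 3 * B * gauss (\<gamma>\<^sup>2) w *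
     (1 / (\<gamma> - w\<^sup>2) + \<gamma>\<^sup>2 * w\<^sup>2 / (\<gamma> - w\<^sup>2) + 2 * w\<^sup>2 / (\<gamma> - w\<^sup>2)\<^sup>2)"

lemma has_field_derivative_sol:
  assumes "\<gamma> ^ 3 = 1" "w\<^sup>2 \<noteq> \<gamma>"
  shows "(sol \<gamma> B has_field_derivative sol_deriv \<gamma> B w) (at w)"
proof -
  have "\<gamma> - w\<^sup>2 \<noteq> 0" using assms(2) by simp
  moreover have "(1 + \<gamma>\<^sup>2 * w\<^sup>2) * (\<gamma> - w\<^sup>2) + 2 * w\<^sup>2 + \<gamma>\<^sup>2 * (\<gamma> - w\<^sup>2)\<^sup>2 = 2 * \<gamma>"
    using assms(1) by algebra
  ultimately show ?thesis
    unfolding sol_def [abs_def]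
    by (auto intro!: derivative_eq_intros) (simp add: sol_deriv_def divide_simps, algebra)
qed

lemma has_field_derivative_weighted_sol:
  assumes "\<gamma> ^ 3 = 1" "w\<^sup>2 \<noteq> \<gamma>"
  shows "((\<lambda>w. (\<gamma> - w\<^sup>2) * sol \<gamma> B w) has_field_derivative weighted_sol_d1 \<gamma> B w) (at w)"
proof -
  have "\<gamma> - w\<^sup>2 \<noteq> 0" using assms(2) by simp
  then show ?thesis
    by (auto intro!: derivative_eq_intros has_field_derivative_sol[OF assms])
       (simp add: sol_deriv_def weighted_sol_d1_def divide_simps, algebra)
qed

lemma has_field_derivative_weighted_sol_d1:
  assumes "\<gamma> ^ 3 = 1" "w\<^sup>2 \<noteq> \<gamma>"
  shows "(weighted_sol_d1 \<gamma> B has_field_derivative weighted_sol_d2 \<gamma> B w) (at w)"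
proof -
  have "\<gamma> - w\<^sup>2 \<noteq> 0" using assms(2) by simp
  then show ?thesis
    unfolding weighted_sol_d1_def [abs_def]
    by (auto intro!: derivative_eq_intros has_field_derivative_sol[OF assms])
       (simp add: sol_deriv_def weighted_sol_d2_def divide_simps, algebra)
qed

lemma has_field_derivative_weighted_sol_d2:
  assumes "\<gamma> ^ 3 = 1" "w\<^sup>2 \<noteq> \<gamma>"
  shows "(weighted_sol_d2 \<gamma> B has_field_derivative weighted_sol_d3 \<gamma> B w) (at w)"
proof -
  have "\<gamma> - w\<^sup>2 \<noteq> 0" using assms(2) by simp
  then show ?thesis
    unfolding weighted_sol_d2_def [abs_def]
    by (auto intro!: derivative_eq_intros has_field_derivative_sol[OF assms])
       (simp add: sol_deriv_def weighted_sol_d3_def divide_simps, algebra)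
qed

lemma sol_ode:
  assumes "\<gamma> ^ 3 = 1" "w\<^sup>2 \<noteq> \<gamma>"
  shows "\<gamma> * (\<gamma> - w\<^sup>2)\<^sup>2 * sol_deriv \<gamma> B w + weighted_sol_d3 \<gamma> B w = 0"
proof -
  have "\<gamma> - w\<^sup>2 \<noteq> 0" using assms(2) by simp
  moreover have "\<gamma>\<^sup>2 * (\<gamma> - w\<^sup>2)\<^sup>2 - 2 * \<gamma> + \<gamma> ^ 3 * ((1 + \<gamma>\<^sup>2 * w\<^sup>2) * (\<gamma> - w\<^sup>2) + 2 * w\<^sup>2) = 0"
    using assms(1) by algebra
  ultimately show ?thesis
    unfolding sol_deriv_def weighted_sol_d3_def by (simp add: divide_simps) algebra
qed

lemma of_real_square_neq_nonreal: "Im \<gamma> \<noteq> 0 \<Longrightarrow> (complex_of_real t)\<^sup>2 \<noteq> \<gamma>"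
  by (auto simp flip: of_real_power)

lemma sol_solves_ode_on_reals:
  assumes "\<gamma> ^ 3 = 1" "Im \<gamma> \<noteq> 0"
  shows "((\<lambda>t. sol \<gamma> B (of_real t)) has_vector_derivative sol_deriv \<gamma> B (of_real z)) (at z) \<and>
    ((\<lambda>t. (\<gamma> - (of_real t)\<^sup>2) * sol \<gamma> B (of_real t)) has_vector_derivative weighted_sol_d1 \<gamma> B (of_real z)) (at z) \<and>
    ((\<lambda>t. weighted_sol_d1 \<gamma> B (of_real t)) has_vector_derivative weighted_sol_d2 \<gamma> B (of_real z)) (at z) \<and>
    ((\<lambda>t. weighted_sol_d2 \<gamma> B (of_real t)) has_vector_derivative weighted_sol_d3 \<gamma> B (of_real z)) (at z) \<and>
    \<gamma> * (\<gamma> - (of_real z)\<^sup>2)\<^sup>2 * sol_deriv \<gamma> B (of_real z) + weighted_sol_d3 \<gamma> B (of_real z) = 0"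
  using of_real_square_neq_nonreal[OF assms(2)]
  by (intro conjI has_vector_derivative_real_field has_field_derivative_sol has_field_derivative_weighted_sol
      has_field_derivative_weighted_sol_d1 has_field_derivative_weighted_sol_d2 sol_ode assms)

lemma sol_quotient_tendsto_0:
  assumes "Re (\<gamma>\<^sup>2) < 0" "Im \<gamma> \<noteq> 0"
  shows "((\<lambda>t. of_real t * gauss (\<gamma>\<^sup>2) (of_real t) / (\<gamma> - (of_real t)\<^sup>2)) \<longlongrightarrow> 0) at_top"
proof (rule Lim_null_comparison)
  show "\<forall>\<^sub>F t in at_top. norm (of_real t * gauss (\<gamma>\<^sup>2) (of_real t) / (\<gamma> - (of_real t)\<^sup>2))
      \<le> t * exp (Re (\<gamma>\<^sup>2) * t\<^sup>2 / 2) / \<bar>Im \<gamma>\<bar>"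
    using eventually_ge_at_top[of 0]
  proof eventually_elim
    case (elim t)
    have "\<bar>Im \<gamma>\<bar> \<le> norm (\<gamma> - (of_real t)\<^sup>2)"
      using abs_Im_le_cmod[of "\<gamma> - (of_real t)\<^sup>2"] by (simp flip: of_real_power)
    then show ?case
      using elim assms(2) by (simp add: norm_mult norm_divide norm_gauss_of_real frac_le)
  qed
  show "((\<lambda>t. t * exp (Re (\<gamma>\<^sup>2) * t\<^sup>2 / 2) / \<bar>Im \<gamma>\<bar>) \<longlongrightarrow> 0) at_top"
    using assms by real_asymp
qed

lemma sol_tendsto_at_top_at_bot:
  assumes "Re (\<gamma>\<^sup>2) < 0" "Im \<gamma> \<noteq> 0"
    and prim: "((\<lambda>t. gauss_prim (\<gamma>\<^sup>2) (of_real t)) \<longlongrightarrow> c) at_top"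
  shows "((\<lambda>t. sol \<gamma> B (of_real t)) \<longlongrightarrow> 1/2 + B * \<gamma>\<^sup>2 * c) at_top"
    and "((\<lambda>t. sol \<gamma> B (of_real t)) \<longlongrightarrow> 1/2 - B * \<gamma>\<^sup>2 * c) at_bot"
proof -
  have "((\<lambda>t. 1/2 + B * (of_real t * gauss (\<gamma>\<^sup>2) (of_real t) / (\<gamma> - (of_real t)\<^sup>2) +
      \<gamma>\<^sup>2 * gauss_prim (\<gamma>\<^sup>2) (of_real t))) \<longlongrightarrow> 1/2 + B * (0 + \<gamma>\<^sup>2 * c)) at_top"
    by (intro tendsto_intros prim sol_quotient_tendsto_0 assms)
  then show "((\<lambda>t. sol \<gamma> B (of_real t)) \<longlongrightarrow> 1/2 + B * \<gamma>\<^sup>2 * c) at_top"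
    by (simp add: sol_def mult.assoc)
  have "((\<lambda>t. 1/2 - B * (of_real t * gauss (\<gamma>\<^sup>2) (of_real t) / (\<gamma> - (of_real t)\<^sup>2) +
      \<gamma>\<^sup>2 * gauss_prim (\<gamma>\<^sup>2) (of_real t))) \<longlongrightarrow> 1/2 - B * (0 + \<gamma>\<^sup>2 * c)) at_top"
    by (intro tendsto_intros prim sol_quotient_tendsto_0 assms)
  moreover have "sol \<gamma> B (of_real (-t)) = 1/2 - B * (of_real t * gauss (\<gamma>\<^sup>2) (of_real t) /
      (\<gamma> - (of_real t)\<^sup>2) + \<gamma>\<^sup>2 * gauss_prim (\<gamma>\<^sup>2) (of_real t))" for t
    using gauss_even[of _ "of_real t"] gauss_prim_odd[of _ "of_real t"]
    by (simp add: sol_def algebra_simps)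
  ultimately show "((\<lambda>t. sol \<gamma> B (of_real t)) \<longlongrightarrow> 1/2 - B * \<gamma>\<^sup>2 * c) at_bot"
    by (simp add: filterlim_at_bot_mirror mult.assoc)
qed

definition gauss_int :: "real \<Rightarrow> real" where
  "gauss_int t = Re (gauss_prim (-1) (of_real t))"

lemma gauss_prim_minus_one_of_real: "gauss_prim (-1) (of_real t) = of_real (gauss_int t)"
  using Im_gauss_prim_of_real[of "-1" t] by (simp add: gauss_int_def complex_eq_iff)

lemma gauss_int_has_real_derivative: "(gauss_int has_real_derivative exp (- t\<^sup>2 / 2)) (at t)"
proof -
  have "((\<lambda>t. gauss_prim (-1) (of_real t)) has_vector_derivative gauss (-1) (of_real t)) (at t)"
    by (intro has_vector_derivative_real_field gauss_prim_has_field_derivative)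
  then show ?thesis
    unfolding gauss_int_def [abs_def]
    using has_field_derivative_Re gauss_of_real[of "-1" t] by fastforce
qed

lemma gauss_int_0 [simp]: "gauss_int 0 = 0"
  by (simp add: gauss_int_def)

lemma mono_gauss_int: "mono gauss_int"
  by (intro monoI DERIV_nonneg_imp_nondecreasing[where f = gauss_int])
     (auto intro: gauss_int_has_real_derivative)

lemma gauss_int_pos: "gauss_int 1 > 0"
  using DERIV_pos_imp_increasing[of 0 1 gauss_int] gauss_int_has_real_derivative by force

text \<open>gauss_int t + exp (1/2 - t) decreases on t \<ge> 0, since -t^2/2 \<le> 1/2 - t.\<close>
lemma gauss_int_le: "gauss_int t \<le> exp (1/2)"
proof (cases "t \<ge> 0")
  case True
  have "gauss_int t + exp (1/2 - t) \<le> gauss_int 0 + exp (1/2 - 0)"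
  proof (rule DERIV_nonpos_imp_nonincreasing[where f = "\<lambda>t. gauss_int t + exp (1/2 - t)"])
    fix x :: real
    have "((\<lambda>t. gauss_int t + exp (1/2 - t)) has_real_derivative exp (- x\<^sup>2 / 2) - exp (1/2 - x)) (at x)"
      by (auto intro!: derivative_eq_intros gauss_int_has_real_derivative)
    moreover have "exp (- x\<^sup>2 / 2) \<le> exp (1/2 - x)"
      using sum_power2_ge_zero[of "x - 1" 0] by (simp add: power2_eq_square algebra_simps)
    ultimately show "\<exists>y. ((\<lambda>t. gauss_int t + exp (1/2 - t)) has_real_derivative y) (at x) \<and> y \<le> 0"
      by force
  qed (use True in simp)
  then have "gauss_int t + exp (1/2 - t) \<le> exp (1/2)"
    by simp
  moreover have "0 < exp (1/2 - t)"
    by simp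
  ultimately show ?thesis
    by linarith
next
  case False
  then have "gauss_int t \<le> 0"
    using monoD[OF mono_gauss_int, of t 0] by simp
  then show ?thesis
    using exp_gt_zero[of "1/2"] by linarith
qed

lemma bdd_above_gauss_int: "bdd_above (range gauss_int)"
  using gauss_int_le by (intro bdd_aboveI2)

lemma gauss_int_tendsto: "(gauss_int \<longlongrightarrow> (SUP t. gauss_int t)) at_top"
  by (intro tendsto_SUP_at_top_mono mono_gauss_int bdd_above_gauss_int)

lemma gauss_int_SUP_pos: "(SUP t. gauss_int t) > 0"
  using gauss_int_pos cSUP_upper[OF UNIV_I bdd_above_gauss_int, of 1] by linarith

definition \<gamma>\<^sub>0 :: complex where
  "\<gamma>\<^sub>0 = Complex (-1/2) (- sqrt 3 / 2)"

definition \<omega> :: complex where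
  "\<omega> = Complex (sqrt 3 / 2) (1/2)"

lemma \<gamma>\<^sub>0_square: "\<gamma>\<^sub>0\<^sup>2 = Complex (-1/2) (sqrt 3 / 2)"
  by (simp add: \<gamma>\<^sub>0_def power2_eq_square complex_eq_iff)

lemma \<gamma>\<^sub>0_cube: "\<gamma>\<^sub>0 ^ 3 = 1"
  by (simp add: \<gamma>\<^sub>0_def power3_eq_cube complex_eq_iff field_simps)

lemma \<gamma>\<^sub>0_square_\<omega>_square: "\<gamma>\<^sub>0\<^sup>2 * \<omega>\<^sup>2 = -1"
  unfolding \<gamma>\<^sub>0_square by (simp add: \<omega>_def power2_eq_square complex_eq_iff field_simps)

lemma segment_\<omega>_coordinates:
  assumes "R \<ge> 0" "x \<in> closed_segment (\<omega> * of_real R) (of_real R)"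
  shows "R * sqrt 3 / 2 \<le> Re x" "0 \<le> Im x" "Im x \<le> R / 2"
proof -
  obtain u where u: "0 \<le> u" "u \<le> 1" and x: "x = (1 - u) *\<^sub>R (\<omega> * of_real R) + u *\<^sub>R of_real R"
    using assms(2) by (auto simp: in_segment)
  have "Re x = R * sqrt 3 / 2 + R * u * (1 - sqrt 3 / 2)" "Im x = R * (1 - u) / 2"
    by (simp_all add: x \<omega>_def algebra_simps)
  moreover have "0 \<le> R * u * (1 - sqrt 3 / 2)"
    using assms(1) u by (simp add: real_sqrt_le_iff')
  moreover have "0 \<le> R * (1 - u)" "R * (1 - u) \<le> R"
    using assms(1) u by (simp_all add: mult_left_le)
  ultimately show "R * sqrt 3 / 2 \<le> Re x" "0 \<le> Im x" "Im x \<le> R / 2"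
    by simp_all
qed

lemma norm_gauss_on_segment:
  assumes "R \<ge> 0" "x \<in> closed_segment (\<omega> * of_real R) (of_real R)"
  shows "norm (gauss (\<gamma>\<^sub>0\<^sup>2) x) \<le> exp (- R\<^sup>2 / 8)"
proof -
  note coords = segment_\<omega>_coordinates[OF assms]
  have "(R * sqrt 3 / 2)\<^sup>2 \<le> (Re x)\<^sup>2"
    using coords(1) assms(1) by (intro power_mono) auto
  then have re: "3 / 4 * R\<^sup>2 \<le> (Re x)\<^sup>2"
    by (simp add: power_mult_distrib power_divide)
  have "(Im x)\<^sup>2 \<le> (R / 2)\<^sup>2"
    using coords(2,3) by (intro power_mono)
  then have im: "(Im x)\<^sup>2 \<le> R\<^sup>2 / 4"
    by (simp add: power_divide)
  have "0 \<le> R * sqrt 3 / 2"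
    using assms(1) by simp
  then have "0 \<le> Re x"
    using coords(1) by linarith
  then have "0 \<le> sqrt 3 * Re x * Im x"
    using coords(2) by simp
  moreover have "Re (\<gamma>\<^sub>0\<^sup>2 * x\<^sup>2 / 2) = ((Im x)\<^sup>2 - (Re x)\<^sup>2) / 4 - sqrt 3 * Re x * Im x / 2"
    unfolding \<gamma>\<^sub>0_square by (simp add: power2_eq_square field_simps)
  ultimately have "Re (\<gamma>\<^sub>0\<^sup>2 * x\<^sup>2 / 2) \<le> - R\<^sup>2 / 8"
    using re im by (simp add: field_simps)
  then show ?thesis
    by (simp add: gauss_def)
qed

lemma norm_gauss_prim_real_minus_rotated:
  assumes "R \<ge> 0"
  shows "norm (gauss_prim (\<gamma>\<^sub>0\<^sup>2) (of_real R) - gauss_prim (\<gamma>\<^sub>0\<^sup>2) (\<omega> * of_real R))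
    \<le> norm (1 - \<omega>) * (R * exp (- R\<^sup>2 / 8))"
proof -
  have "norm (gauss_prim (\<gamma>\<^sub>0\<^sup>2) (of_real R) - gauss_prim (\<gamma>\<^sub>0\<^sup>2) (\<omega> * of_real R))
      \<le> exp (- R\<^sup>2 / 8) * norm (of_real R - \<omega> * of_real R)"
    by (rule has_contour_integral_bound_linepath[OF has_contour_integral_gauss_linepath _
        norm_gauss_on_segment[OF assms]]) simp
  also have "of_real R - \<omega> * of_real R = (1 - \<omega>) * of_real R"
    by (simp add: algebra_simps)
  finally show ?thesis
    using assms by (simp add: norm_mult ac_simps)
qed

lemma gauss_prim_\<gamma>\<^sub>0_tendsto:
  "((\<lambda>t. gauss_prim (\<gamma>\<^sub>0\<^sup>2) (of_real t)) \<longlongrightarrow> \<omega> * of_real (SUP t. gauss_int t)) at_top"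
proof -
  have rotated: "gauss_prim (\<gamma>\<^sub>0\<^sup>2) (\<omega> * of_real t) = \<omega> * of_real (gauss_int t)" for t
    by (simp add: gauss_prim_rotate[OF \<gamma>\<^sub>0_square_\<omega>_square] gauss_prim_minus_one_of_real)
  have "((\<lambda>t. gauss_prim (\<gamma>\<^sub>0\<^sup>2) (of_real t) - gauss_prim (\<gamma>\<^sub>0\<^sup>2) (\<omega> * of_real t)) \<longlongrightarrow> 0) at_top"
  proof (rule Lim_null_comparison)
    show "\<forall>\<^sub>F t in at_top. norm (gauss_prim (\<gamma>\<^sub>0\<^sup>2) (of_real t) - gauss_prim (\<gamma>\<^sub>0\<^sup>2) (\<omega> * of_real t))
        \<le> norm (1 - \<omega>) * (t * exp (- t\<^sup>2 / 8))"
      using eventually_ge_at_top[of 0] by eventually_elim (rule norm_gauss_prim_real_minus_rotated)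
    have "((\<lambda>t::real. t * exp (- t\<^sup>2 / 8)) \<longlongrightarrow> 0) at_top"
      by real_asymp
    then show "((\<lambda>t. norm (1 - \<omega>) * (t * exp (- t\<^sup>2 / 8))) \<longlongrightarrow> 0) at_top"
      by (rule tendsto_mult_right_zero)
  qed
  moreover have "((\<lambda>t. gauss_prim (\<gamma>\<^sub>0\<^sup>2) (\<omega> * of_real t)) \<longlongrightarrow> \<omega> * of_real (SUP t. gauss_int t)) at_top"
    unfolding rotated by (intro tendsto_intros gauss_int_tendsto)
  ultimately show ?thesis
    by (rule Lim_transform[rotated])
qed

theorem lemma1p2:
  shows "\<exists>(\<gamma>::complex) (W::real \<Rightarrow> complex).
    Im \<gamma> < 0 \<and>
    (\<exists>W1 V1 V2 V3.
       \<forall>z::real.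
         (W has_vector_derivative W1 z) (at z) \<and>
         ((\<lambda>t. (\<gamma> - (complex_of_real t)\<^sup>2) * W t) has_vector_derivative V1 z) (at z) \<and>
         (V1 has_vector_derivative V2 z) (at z) \<and>
         (V2 has_vector_derivative V3 z) (at z) \<and>
         \<gamma> * (\<gamma> - (complex_of_real z)\<^sup>2)\<^sup>2 * W1 z + V3 z = 0) \<and>
    (W \<longlongrightarrow> 0) at_bot \<and>
    (W \<longlongrightarrow> 1) at_top"
proof -
  define c where "c = \<omega> * of_real (SUP t. gauss_int t)"
  define B where "B = 1 / (2 * \<gamma>\<^sub>0\<^sup>2 * c)"
  have "c \<noteq> 0" "\<gamma>\<^sub>0 \<noteq> 0"
    using gauss_int_SUP_pos by (auto simp: c_def \<omega>_def \<gamma>\<^sub>0_def complex_eq_iff)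
  then have B: "B * \<gamma>\<^sub>0\<^sup>2 * c = 1/2"
    by (simp add: B_def)
  have Im: "Im \<gamma>\<^sub>0 < 0"
    by (simp add: \<gamma>\<^sub>0_def)
  have Re: "Re (\<gamma>\<^sub>0\<^sup>2) < 0"
    by (simp add: \<gamma>\<^sub>0_square)
  note limits = sol_tendsto_at_top_at_bot[OF Re Im[THEN less_imp_neq] gauss_prim_\<gamma>\<^sub>0_tendsto[folded c_def], of B]
  show ?thesis
    using sol_solves_ode_on_reals[OF \<gamma>\<^sub>0_cube Im[THEN less_imp_neq], of B] limits Im
    unfolding B by (intro exI[of _ \<gamma>\<^sub>0] exI[of _ "\<lambda>t. sol \<gamma>\<^sub>0 B (of_real t)"] conjI exI allI) auto
qed

end
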